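(* Let $X$ be a complex Banach space and let $1\leq p<q\leq\infty$. Then $\Pi^{\mathcal{B}}_p(\mathbb{D},X)\subseteq\Pi^{\mathcal{B}}_q(\mathbb{D},X)$ and $\pi^{\mathcal{B}}_q(f)\leq\pi^{\mathcal{B}}_p(f)$ for all $f\in\Pi^{\mathcal{B}}_p(\mathbb{D},X)$. Moreover, $\Pi^{\mathcal{B}}_\infty(\mathbb{D},X)=\mathcal{B}(\mathbb{D},X)$ and $\pi^{\mathcal{B}}_\infty(f)=p_{\mathcal{B}}(f)$ for all $f\in\Pi^{\mathcal{B}}_\infty(\mathbb{D},X)$.
   Context: $\mathbb{D}=\{z\in\mathbb{C}:|z|<1\}$. For a complex Banach space $X$, $\mathcal{H}(\mathbb{D},X)$ is the space of holomorphic maps $\mathbb{D}\to X$. For $f\in\mathcal{H}(\mathbb{D},X)$ let $p_{\mathcal{B}}(f)=\sup_{z\in\mathbb{D}}(1-|z|^2)\|f'(z)\|$; $\mathcal{B}(\mathbb{D},X)$ is the space of $f\in\mathcal{H}(\mathbb{D},X)$ with $p_{\mathcal{B}}(f)<\infty$, and $\widehat{\mathcal{B}}(\mathbb{D},X)=\{f\in\mathcal{B}(\mathbb{D},X): f(0)=0\}$, a Banach space with norm $p_{\mathcal{B}}$. Write $\widehat{\mathcal{B}}(\mathbb{D})=\widehat{\mathcal{B}}(\mathbb{D},\mathbb{C})$ and $B_{\widehat{\mathcal{B}}(\mathbb{D})}$ for its closed unit ball. For $1\leq p<\infty$, a map $f\in\mathcal{H}(\mathbb{D},X)$ is called $p$-summing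 Bloch if there is $c\geq0$ such that for all $n\in\mathbb{N}$, $\lambda_1,\dots,\lambda_n\in\mathbb{C}$, $z_1,\dots,z_n\in\mathbb{D}$: $\left(\sum_{i=1}^n|\lambda_i|^p\|f'(z_i)\|^p\right)^{1/p}\leq c\sup_{g\in B_{\widehat{\mathcal{B}}(\mathbb{D})}}\left(\sum_{i=1}^n|\lambda_i|^p|g'(z_i)|^p\right)^{1/p}$; for $p=\infty$ the condition is $\max_{i}|\lambda_i|\|f'(z_i)\|\leq c\sup_{g\in B_{\widehat{\mathcal{B}}(\mathbb{D})}}\max_i|\lambda_i||g'(z_i)|$. The least such $c$ is denoted $\pi^{\mathcal{B}}_p(f)$, and $\Pi^{\mathcal{B}}_p(\mathbb{D},X)$ denotes the space of all $p$-summing Bloch maps $\mathbb{D}\to X$. *)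

theory Defs
  imports "HOL-Analysis.Analysis"
begin

class complex_banach = banach +
  fixes cscale :: "complex \<Rightarrow> 'a \<Rightarrow> 'a"  (infixr \<open>*\<^sub>C\<close> 75)
  assumes cscale_add_right: "a *\<^sub>C (x + y) = a *\<^sub>C x + a *\<^sub>C y"
    and cscale_add_left: "(a + b) *\<^sub>C x = a *\<^sub>C x + b *\<^sub>C x"
    and cscale_cscale: "a *\<^sub>C (b *\<^sub>C x) = (a * b) *\<^sub>C x"
    and cscale_one: "1 *\<^sub>C x = x"
    and cscale_of_real: "(complex_of_real r) *\<^sub>C x = r *\<^sub>R x"
    and norm_cscale: "norm (a *\<^sub>C x) = cmod a * norm x"

instantiation complex :: complex_banach
begin
definition cscale_complex :: "complex \<Rightarrow> complex \<Rightarrow> complex" where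
  "cscale_complex a x = a * x"
instance
  by standard (auto simp: cscale_complex_def algebra_simps norm_mult scaleR_conv_of_real)
end

definition unit_disc :: "complex set" where
  "unit_disc = ball 0 1"

definition has_cderiv :: "(complex \<Rightarrow> 'a::complex_banach) \<Rightarrow> 'a \<Rightarrow> complex \<Rightarrow> bool" where
  "has_cderiv f D z \<longleftrightarrow> (f has_derivative (\<lambda>h. h *\<^sub>C D)) (at z)"

definition cder :: "(complex \<Rightarrow> 'a::complex_banach) \<Rightarrow> complex \<Rightarrow> 'a" where
  "cder f z = (SOME D. has_cderiv f D z)"

definition holo_disc :: "(complex \<Rightarrow> 'a::complex_banach) \<Rightarrow> bool" where
  "holo_disc f \<longleftrightarrow> (\<forall>z\<in>unit_disc. \<exists>D. has_cderiv f D z)"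

definition bloch_norm :: "(complex \<Rightarrow> 'a::complex_banach) \<Rightarrow> real" where
  "bloch_norm f = (SUP z\<in>unit_disc. (1 - (cmod z)\<^sup>2) * norm (cder f z))"

definition bloch_space :: "(complex \<Rightarrow> 'a::complex_banach) set" where
  "bloch_space = {f. holo_disc f \<and>
      bdd_above ((\<lambda>z. (1 - (cmod z)\<^sup>2) * norm (cder f z)) ` unit_disc)}"

definition bloch_hat_ball :: "(complex \<Rightarrow> complex) set" where
  "bloch_hat_ball = {g. g \<in> bloch_space \<and> g 0 = 0 \<and> bloch_norm g \<le> 1}"

text \<open>The \<open>\<ell>_p\<close> norm of \<open>(a_0,\<dots>,a_{n-1})\<close> (nonnegative entries), \<open>1 \<le> p \<le> \<infinity>\<close>.\<close>
definition lp_fin :: "ereal \<Rightarrow> nat \<Rightarrow> (nat \<Rightarrow> real) \<Rightarrow> real" where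
  "lp_fin p n a = (if p = \<infinity> then Max (insert 0 (a ` {..<n}))
     else (\<Sum>i<n. a i powr real_of_ereal p) powr (1 / real_of_ereal p))"

definition psum_const :: "ereal \<Rightarrow> (complex \<Rightarrow> 'a::complex_banach) \<Rightarrow> real \<Rightarrow> bool" where
  "psum_const p f c \<longleftrightarrow> c \<ge> 0 \<and>
     (\<forall>n (lam :: nat \<Rightarrow> complex) (z :: nat \<Rightarrow> complex). (\<forall>i<n. z i \<in> unit_disc) \<longrightarrow>
        lp_fin p n (\<lambda>i. cmod (lam i) * norm (cder f (z i)))
          \<le> c * (SUP g\<in>bloch_hat_ball. lp_fin p n (\<lambda>i. cmod (lam i) * cmod (cder g (z i)))))"

definition Pi_bloch :: "ereal \<Rightarrow> (complex \<Rightarrow> 'a::complex_banach) set" where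
  "Pi_bloch p = {f. holo_disc f \<and> (\<exists>c. psum_const p f c)}"

definition pi_bloch :: "ereal \<Rightarrow> (complex \<Rightarrow> 'a::complex_banach) \<Rightarrow> real" where
  "pi_bloch p f = Inf {c. psum_const p f c}"

end

theory Submission
  imports Defs
begin

text \<open>Testing the summing inequality at a single point \<open>z\<close> bounds \<open>(1 - |z|\<^sup>2) \<parallel>f'(z)\<parallel>\<close> by any
  admissible constant, because the functions \<open>g\<^sub>a(w) = (1 - |a|\<^sup>2) w / (1 - cnj a * w)\<close> lie in the
  unit ball of \<open>\<widehat>\<B>(\<bbbD>)\<close> and attain the largest possible value \<open>|g\<^sub>a'(a)| = 1 / (1 - |a|\<^sup>2)\<close>.
  Conversely this pointwise bound gives the \<open>\<infinity>\<close>-summing inequality termwise, so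
  \<open>\<Pi>\<^sub>\<infinity>\<close> is the Bloch space with \<open>\<pi>\<^sub>\<infinity> = p\<^sub>B\<close>, and every \<open>p\<close>-summing constant is \<open>\<infinity>\<close>-summing.
  For finite \<open>p < q\<close> one applies the \<open>p\<close>-summing inequality to the weights
  \<open>a\<^sub>i\<^bsup>(q-p)/p\<^esup> \<lambda>\<^sub>i\<close>, where \<open>a\<^sub>i = |\<lambda>\<^sub>i| \<parallel>f'(z\<^sub>i)\<parallel>\<close>: the left side becomes \<open>\<parallel>a\<parallel>\<^sub>q\<^bsup>q/p\<^esup>\<close>, and
  Hoelder's inequality with exponents \<open>q/(q-p)\<close> and \<open>q/p\<close> bounds the right side by
  \<open>\<parallel>a\<parallel>\<^sub>q\<^bsup>(q-p)/p\<^esup>\<close> times the \<open>q\<close>-supremum; cancelling gives the \<open>q\<close>-summing inequality.\<close>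

lemma cder_eqI:
  assumes "has_cderiv f D z"
  shows "cder f z = D"
proof -
  have "has_cderiv f (cder f z) z"
    unfolding cder_def using assms by (rule someI)
  then have "(\<lambda>h. h *\<^sub>C cder f z) = (\<lambda>h. h *\<^sub>C D)"
    using assms unfolding has_cderiv_def by (rule has_derivative_unique)
  then have "1 *\<^sub>C cder f z = 1 *\<^sub>C D" by metis
  then show ?thesis by (simp add: cscale_one)
qed

lemma has_cderiv_iff_has_field_derivative:
  "has_cderiv (g :: complex \<Rightarrow> complex) D z \<longleftrightarrow> (g has_field_derivative D) (at z)"
proof -
  have "(\<lambda>h. h *\<^sub>C D) = (*) D" by (auto simp: cscale_complex_def mult.commute)
  then show ?thesis by (simp add: has_cderiv_def has_field_derivative_def)
qed

lemma unit_disc_iff: "z \<in> unit_disc \<longleftrightarrow> cmod z < 1"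
  by (simp add: unit_disc_def)

lemma unit_disc_weight_pos: "z \<in> unit_disc \<Longrightarrow> 0 < 1 - (cmod z)\<^sup>2"
  by (simp add: unit_disc_iff abs_square_less_1)

lemma bloch_space_weighted_le_bloch_norm:
  assumes "f \<in> bloch_space" and "z \<in> unit_disc"
  shows "(1 - (cmod z)\<^sup>2) * norm (cder f z) \<le> bloch_norm f"
  unfolding bloch_norm_def using assms(2)
  by (rule cSUP_upper) (use assms(1) in \<open>simp add: bloch_space_def\<close>)

lemma bloch_hat_ball_cder_le:
  assumes "g \<in> bloch_hat_ball" and "z \<in> unit_disc"
  shows "cmod (cder g z) \<le> 1 / (1 - (cmod z)\<^sup>2)"
proof -
  have "(1 - (cmod z)\<^sup>2) * cmod (cder g z) \<le> 1"
    using bloch_space_weighted_le_bloch_norm[OF _ assms(2), of g] assms(1)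
    by (auto simp: bloch_hat_ball_def)
  then show ?thesis
    using unit_disc_weight_pos[OF assms(2)] by (simp add: field_simps)
qed

lemma weight_le_cmod_one_minus_cnj_mult:
  fixes a w :: complex
  assumes "cmod a < 1" and "cmod w < 1"
  shows "(1 - (cmod w)\<^sup>2) * (1 - (cmod a)\<^sup>2) \<le> (cmod (1 - cnj a * w))\<^sup>2"
proof -
  have "0 \<le> 1 - cmod a * cmod w"
    using assms by (simp add: mult_le_one less_imp_le)
  moreover have "1 - cmod a * cmod w \<le> cmod (1 - cnj a * w)"
    using norm_triangle_ineq2[of 1 "cnj a * w"] by (simp add: norm_mult)
  ultimately have "(1 - cmod a * cmod w)\<^sup>2 \<le> (cmod (1 - cnj a * w))\<^sup>2"
    by (simp add: power_mono)
  moreover have "(1 - (cmod w)\<^sup>2) * (1 - (cmod a)\<^sup>2) \<le> (1 - cmod a * cmod w)\<^sup>2"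
    using sum_squares_ge_zero[of "cmod a - cmod w" 0]
    by (simp add: power2_eq_square algebra_simps)
  ultimately show ?thesis by linarith
qed

definition bloch_peak :: "complex \<Rightarrow> complex \<Rightarrow> complex" where
  "bloch_peak a w = of_real (1 - (cmod a)\<^sup>2) * w / (1 - cnj a * w)"

lemma one_minus_cnj_mult_nonzero:
  assumes "cmod a < 1" and "cmod w < 1"
  shows "1 - cnj a * w \<noteq> 0"
proof -
  have "cmod (cnj a * w) < 1"
    using assms by (simp add: norm_mult mult_strict_mono' [of "cmod a" 1 "cmod w" 1, simplified])
  then show ?thesis by auto
qed

lemma bloch_peak_has_field_derivative:
  assumes "cmod a < 1" and "cmod w < 1"
  shows "(bloch_peak a has_field_derivative
           of_real (1 - (cmod a)\<^sup>2) / (1 - cnj a * w)\<^sup>2) (at w)"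
proof -
  have "bloch_peak a = (\<lambda>w. of_real (1 - (cmod a)\<^sup>2) * w / (1 - cnj a * w))"
    by (simp add: fun_eq_iff bloch_peak_def)
  then show ?thesis
    using one_minus_cnj_mult_nonzero[OF assms]
    by (auto intro!: derivative_eq_intros simp: power2_eq_square field_simps)
qed

lemma cder_bloch_peak:
  assumes "cmod a < 1" and "w \<in> unit_disc"
  shows "cder (bloch_peak a) w = of_real (1 - (cmod a)\<^sup>2) / (1 - cnj a * w)\<^sup>2"
  using assms bloch_peak_has_field_derivative
  by (intro cder_eqI) (simp add: has_cderiv_iff_has_field_derivative unit_disc_iff)

lemma bloch_peak_in_bloch_hat_ball:
  assumes "a \<in> unit_disc"
  shows "bloch_peak a \<in> bloch_hat_ball"
proof -
  have a: "cmod a < 1" using assms by (simp add: unit_disc_iff)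
  have "holo_disc (bloch_peak a)"
    unfolding holo_disc_def has_cderiv_iff_has_field_derivative
    using bloch_peak_has_field_derivative[OF a] unit_disc_iff by blast
  moreover have weighted: "(1 - (cmod w)\<^sup>2) * cmod (cder (bloch_peak a) w) \<le> 1"
    if "w \<in> unit_disc" for w
  proof -
    have w: "cmod w < 1" using that by (simp add: unit_disc_iff)
    have "0 < (cmod (1 - cnj a * w))\<^sup>2"
      using one_minus_cnj_mult_nonzero[OF a w] by simp
    moreover have "0 < 1 - (cmod a)\<^sup>2"
      using assms by (rule unit_disc_weight_pos)
    ultimately show ?thesis
      using weight_le_cmod_one_minus_cnj_mult[OF a w]
      by (simp add: cder_bloch_peak[OF a that] norm_divide norm_power
          del: of_real_diff of_real_power)
  qed
  moreover have "bloch_norm (bloch_peak a) \<le> 1"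
    unfolding bloch_norm_def using weighted by (intro cSUP_least) (auto simp: unit_disc_def)
  ultimately show ?thesis
    by (auto simp: bloch_hat_ball_def bloch_space_def bloch_peak_def intro!: bdd_aboveI2)
qed

lemma cmod_cder_bloch_peak:
  assumes "a \<in> unit_disc"
  shows "cmod (cder (bloch_peak a) a) = 1 / (1 - (cmod a)\<^sup>2)"
proof -
  have "1 - cnj a * a = of_real (1 - (cmod a)\<^sup>2)"
    by (metis complex_norm_square mult.commute of_real_1 of_real_diff)
  moreover have pos: "0 < 1 - (cmod a)\<^sup>2"
    using assms by (rule unit_disc_weight_pos)
  ultimately have "cder (bloch_peak a) a = 1 / of_real (1 - (cmod a)\<^sup>2)"
    using assms by (simp add: cder_bloch_peak unit_disc_iff power2_eq_square)
  then show ?thesis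
    using pos by (simp add: norm_divide del: of_real_diff of_real_power)
qed

lemma bloch_hat_ball_nonempty: "bloch_hat_ball \<noteq> {}"
  using bloch_peak_in_bloch_hat_ball[of 0] by (auto simp: unit_disc_def)

lemma lp_fin_real: "lp_fin (ereal r) n a = (\<Sum>i<n. a i powr r) powr (1 / r)"
  by (simp add: lp_fin_def)

lemma lp_fin_infinity: "lp_fin \<infinity> n a = Max (insert 0 (a ` {..<n}))"
  by (simp add: lp_fin_def)

lemma lp_fin_nonneg: "0 \<le> lp_fin p n a"
  by (auto simp: lp_fin_def intro: Max_ge)

lemma lp_fin_infinity_ge: "i < n \<Longrightarrow> a i \<le> lp_fin \<infinity> n a"
  unfolding lp_fin_infinity by (intro Max_ge) auto

lemma lp_fin_infinity_le: "(\<And>i. i < n \<Longrightarrow> a i \<le> M) \<Longrightarrow> 0 \<le> M \<Longrightarrow> lp_fin \<infinity> n a \<le> M"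
  unfolding lp_fin_infinity by (subst Max_le_iff) auto

lemma lp_fin_one:
  assumes "1 \<le> p" and "0 \<le> x"
  shows "lp_fin p 1 (\<lambda>_. x) = x"
  using assms by (cases p) (auto simp: lp_fin_def powr_powr lessThan_Suc)

lemma lp_fin_mono:
  assumes "1 \<le> p" and "\<And>i. i < n \<Longrightarrow> 0 \<le> a i \<and> a i \<le> b i"
  shows "lp_fin p n a \<le> lp_fin p n b"
proof (cases p)
  case (real r)
  with assms(1) have "1 \<le> r" by simp
  then show ?thesis
    unfolding real lp_fin_real using assms(2)
    by (intro powr_mono2 sum_mono sum_nonneg) auto
next
  case PInf
  show ?thesis
    unfolding PInf using assms(2)
    by (intro lp_fin_infinity_le) (auto intro: order_trans lp_fin_infinity_ge lp_fin_nonneg)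
qed (use assms(1) in simp)

lemma Holder_inequality_sum:
  fixes x y :: "'a \<Rightarrow> real"
  assumes "finite I" and x: "\<And>i. i \<in> I \<Longrightarrow> 0 \<le> x i" and y: "\<And>i. i \<in> I \<Longrightarrow> 0 \<le> y i"
    and \<alpha>\<beta>: "0 < \<alpha>" "0 < \<beta>" "\<alpha> + \<beta> = 1"
  shows "(\<Sum>i\<in>I. x i powr \<alpha> * y i powr \<beta>) \<le> (\<Sum>i\<in>I. x i) powr \<alpha> * (\<Sum>i\<in>I. y i) powr \<beta>"
proof -
  define X where "X = (\<Sum>i\<in>I. x i)"
  define Y where "Y = (\<Sum>i\<in>I. y i)"
  have "0 \<le> X" "0 \<le> Y" unfolding X_def Y_def using x y by (auto intro: sum_nonneg)
  show ?thesis
  proof (cases "X = 0 \<or> Y = 0")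
    case True
    then have "(\<forall>i\<in>I. x i = 0) \<or> (\<forall>i\<in>I. y i = 0)"
      unfolding X_def Y_def using \<open>finite I\<close> x y by (subst (asm) (1 2) sum_nonneg_eq_0_iff) auto
    then show ?thesis by auto
  next
    case False
    with \<open>0 \<le> X\<close> \<open>0 \<le> Y\<close> have XY: "0 < X" "0 < Y" by auto
    have Young: "x i powr \<alpha> * y i powr \<beta> \<le> X powr \<alpha> * Y powr \<beta> * (\<alpha> * (x i / X) + \<beta> * (y i / Y))"
      if i: "i \<in> I" for i
    proof (cases "x i = 0 \<or> y i = 0")
      case True
      then show ?thesis
        using XY x[OF i] y[OF i] \<alpha>\<beta> by auto
    next
      case False
      then have "0 < x i / X" "0 < y i / Y" using x[OF i] y[OF i] XY by auto
      then have "(x i / X) powr \<alpha> * (y i / Y) powr \<beta> \<le> \<alpha> * (x i / X) + \<beta> * (y i / Y)"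
        using \<alpha>\<beta> by (intro Youngs_inequality_0) auto
      then show ?thesis
        using XY by (simp add: powr_divide field_simps)
    qed
    have "(\<Sum>i\<in>I. x i powr \<alpha> * y i powr \<beta>)
        \<le> (\<Sum>i\<in>I. X powr \<alpha> * Y powr \<beta> * (\<alpha> * (x i / X) + \<beta> * (y i / Y)))"
      using Young by (intro sum_mono) auto
    also have "\<dots> = X powr \<alpha> * Y powr \<beta> * (\<alpha> * X / X + \<beta> * Y / Y)"
      by (simp add: X_def Y_def sum_distrib_left sum.distrib sum_divide_distrib[symmetric]
          algebra_simps)
    also have "\<dots> = X powr \<alpha> * Y powr \<beta>"
      using XY \<alpha>\<beta> by simp
    finally show ?thesis by (simp add: X_def Y_def)
  qed
qed

lemma lp_fin_powr_weighted_le: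
  fixes p q :: real
  assumes "0 < p" "p < q" and "\<And>i. i < n \<Longrightarrow> 0 \<le> a i" and "\<And>i. i < n \<Longrightarrow> 0 \<le> b i"
  shows "lp_fin p n (\<lambda>i. a i powr ((q - p) / p) * b i)
           \<le> lp_fin q n a powr ((q - p) / p) * lp_fin q n b"
proof -
  have "(\<Sum>i<n. (a i powr ((q - p) / p) * b i) powr p)
      = (\<Sum>i<n. (a i powr q) powr ((q - p) / q) * (b i powr q) powr (p / q))"
    using assms by (intro sum.cong) (auto simp: powr_mult powr_powr)
  also have "\<dots> \<le> (\<Sum>i<n. a i powr q) powr ((q - p) / q) * (\<Sum>i<n. b i powr q) powr (p / q)"
    using assms by (intro Holder_inequality_sum) (auto simp: field_simps)
  finally have "(\<Sum>i<n. (a i powr ((q - p) / p) * b i) powr p) powr (1 / p)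
      \<le> ((\<Sum>i<n. a i powr q) powr ((q - p) / q) * (\<Sum>i<n. b i powr q) powr (p / q)) powr (1 / p)"
    using assms by (intro powr_mono2) (auto intro: sum_nonneg)
  then show ?thesis
    using assms by (simp add: lp_fin_real powr_mult powr_powr)
qed

lemma lp_fin_powr_self_weighted:
  fixes p q :: real
  assumes "0 < p" "p < q" and "\<And>i. i < n \<Longrightarrow> 0 \<le> a i"
  shows "lp_fin p n (\<lambda>i. a i powr ((q - p) / p) * a i) = lp_fin q n a powr (q / p)"
proof -
  have "a i powr ((q - p) / p) * a i = a i powr (q / p)" if "i < n" for i
  proof (cases "a i = 0")
    case False
    with assms(3)[OF that] have "a i powr ((q - p) / p) * a i = a i powr ((q - p) / p + 1)"
      by (simp add: powr_add)
    also have "(q - p) / p + 1 = q / p"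
      using assms by (simp add: field_simps)
    finally show ?thesis .
  qed simp
  then have "lp_fin p n (\<lambda>i. a i powr ((q - p) / p) * a i) = lp_fin p n (\<lambda>i. a i powr (q / p))"
    by (simp add: lp_fin_real)
  also have "\<dots> = lp_fin q n a powr (q / p)"
    using assms by (simp add: lp_fin_real powr_powr)
  finally show ?thesis .
qed

text \<open>The supremum on the right of the \<open>p\<close>-summing inequality, i.e. the weak \<open>\<ell>_p\<close> norm of
  the family \<open>lam i * \<delta>(z i)\<close> tested on the unit ball of \<open>\<widehat>\<B>(\<bbbD>)\<close>.\<close>
definition weak_lp_bloch :: "ereal \<Rightarrow> nat \<Rightarrow> (nat \<Rightarrow> complex) \<Rightarrow> (nat \<Rightarrow> complex) \<Rightarrow> real" where
  "weak_lp_bloch p n lam z =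
     (SUP g\<in>bloch_hat_ball. lp_fin p n (\<lambda>i. cmod (lam i) * cmod (cder g (z i))))"

lemma psum_const_iff:
  "psum_const p f c \<longleftrightarrow> 0 \<le> c \<and>
     (\<forall>n lam z. (\<forall>i<n. z i \<in> unit_disc) \<longrightarrow>
        lp_fin p n (\<lambda>i. cmod (lam i) * norm (cder f (z i))) \<le> c * weak_lp_bloch p n lam z)"
  by (simp add: psum_const_def weak_lp_bloch_def)

lemma psum_constD:
  assumes "psum_const p f c" and "\<forall>i<n. z i \<in> unit_disc"
  shows "lp_fin p n (\<lambda>i. cmod (lam i) * norm (cder f (z i))) \<le> c * weak_lp_bloch p n lam z"
  using assms unfolding psum_const_iff by blast

lemma bdd_above_weak_lp_bloch:
  assumes "1 \<le> p" and "\<forall>i<n. z i \<in> unit_disc"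
  shows "bdd_above ((\<lambda>g. lp_fin p n (\<lambda>i. cmod (lam i) * cmod (cder g (z i)))) ` bloch_hat_ball)"
proof (rule bdd_aboveI2)
  fix g assume g: "g \<in> bloch_hat_ball"
  have "cmod (lam i) * cmod (cder g (z i)) \<le> cmod (lam i) * (1 / (1 - (cmod (z i))\<^sup>2))"
    if "i < n" for i
    using assms(2) that by (intro mult_left_mono bloch_hat_ball_cder_le[OF g]) auto
  then show "lp_fin p n (\<lambda>i. cmod (lam i) * cmod (cder g (z i)))
      \<le> lp_fin p n (\<lambda>i. cmod (lam i) * (1 / (1 - (cmod (z i))\<^sup>2)))"
    using assms(1) by (intro lp_fin_mono) auto
qed

lemma lp_fin_le_weak_lp_bloch:
  assumes "1 \<le> p" and "\<forall>i<n. z i \<in> unit_disc" and "g \<in> bloch_hat_ball"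
  shows "lp_fin p n (\<lambda>i. cmod (lam i) * cmod (cder g (z i))) \<le> weak_lp_bloch p n lam z"
  unfolding weak_lp_bloch_def
  using assms(3) bdd_above_weak_lp_bloch[OF assms(1,2)] by (rule cSUP_upper)

lemma weak_lp_bloch_nonneg:
  assumes "1 \<le> p" and "\<forall>i<n. z i \<in> unit_disc"
  shows "0 \<le> weak_lp_bloch p n lam z"
  using bloch_hat_ball_nonempty lp_fin_le_weak_lp_bloch[OF assms]
  by (meson all_not_in_conv lp_fin_nonneg order_trans)

lemma weak_lp_bloch_single_point:
  assumes "1 \<le> p" and "z \<in> unit_disc"
  shows "weak_lp_bloch p 1 (\<lambda>_. 1) (\<lambda>_. z) = 1 / (1 - (cmod z)\<^sup>2)"
  unfolding weak_lp_bloch_def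
proof (rule cSup_eq_maximum)
  show "1 / (1 - (cmod z)\<^sup>2) \<in> (\<lambda>g. lp_fin p 1 (\<lambda>i. cmod 1 * cmod (cder g z))) ` bloch_hat_ball"
  proof (rule image_eqI)
    show "bloch_peak z \<in> bloch_hat_ball"
      using assms(2) by (rule bloch_peak_in_bloch_hat_ball)
    have "0 \<le> 1 / (1 - (cmod z)\<^sup>2)"
      using unit_disc_weight_pos[OF assms(2)] by simp
    then show "1 / (1 - (cmod z)\<^sup>2) = lp_fin p 1 (\<lambda>i. cmod 1 * cmod (cder (bloch_peak z) z))"
      using lp_fin_one[OF assms(1)] cmod_cder_bloch_peak[OF assms(2)] by simp
  qed
  show "x \<le> 1 / (1 - (cmod z)\<^sup>2)"
    if "x \<in> (\<lambda>g. lp_fin p 1 (\<lambda>i. cmod 1 * cmod (cder g z))) ` bloch_hat_ball" for x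
    using that lp_fin_one[OF assms(1)] bloch_hat_ball_cder_le[OF _ assms(2)] by auto
qed

lemma weak_lp_bloch_infinity_ge:
  assumes "\<forall>i<n. z i \<in> unit_disc" and "j < n"
  shows "cmod (lam j) / (1 - (cmod (z j))\<^sup>2) \<le> weak_lp_bloch \<infinity> n lam z"
proof -
  have "cmod (lam j) / (1 - (cmod (z j))\<^sup>2)
      = cmod (lam j) * cmod (cder (bloch_peak (z j)) (z j))"
    using assms by (simp add: cmod_cder_bloch_peak)
  also have "\<dots> \<le> lp_fin \<infinity> n (\<lambda>i. cmod (lam i) * cmod (cder (bloch_peak (z j)) (z i)))"
    using assms(2) by (rule lp_fin_infinity_ge)
  also have "\<dots> \<le> weak_lp_bloch \<infinity> n lam z"
    using assms by (intro lp_fin_le_weak_lp_bloch bloch_peak_in_bloch_hat_ball) auto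
  finally show ?thesis .
qed

lemma psum_const_imp_weighted_cder_le:
  assumes "1 \<le> p" and "psum_const p f c" and "z \<in> unit_disc"
  shows "(1 - (cmod z)\<^sup>2) * norm (cder f z) \<le> c"
proof -
  have "lp_fin p 1 (\<lambda>i. cmod 1 * norm (cder f z)) \<le> c * weak_lp_bloch p 1 (\<lambda>_. 1) (\<lambda>_. z)"
    using psum_constD[OF assms(2), of 1 "\<lambda>_. z" "\<lambda>_. 1"] assms(3) by simp
  then have "norm (cder f z) \<le> c * (1 / (1 - (cmod z)\<^sup>2))"
    using lp_fin_one[OF assms(1)] weak_lp_bloch_single_point[OF assms(1,3)] by simp
  then show ?thesis
    using unit_disc_weight_pos[OF assms(3)] by (simp add: field_simps)
qed

lemma psum_const_infinity_iff:
  "psum_const \<infinity> f c \<longleftrightarrow> (\<forall>z\<in>unit_disc. (1 - (cmod z)\<^sup>2) * norm (cder f z) \<le> c)"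
proof
  show "\<forall>z\<in>unit_disc. (1 - (cmod z)\<^sup>2) * norm (cder f z) \<le> c" if "psum_const \<infinity> f c"
    using psum_const_imp_weighted_cder_le[OF _ that] by simp
next
  assume bound: "\<forall>z\<in>unit_disc. (1 - (cmod z)\<^sup>2) * norm (cder f z) \<le> c"
  have "0 \<le> c"
    using bound[rule_format, of 0] by (auto simp: unit_disc_def intro: order_trans[OF norm_ge_zero])
  moreover have "lp_fin \<infinity> n (\<lambda>i. cmod (lam i) * norm (cder f (z i))) \<le> c * weak_lp_bloch \<infinity> n lam z"
    if z: "\<forall>i<n. z i \<in> unit_disc" for n lam z
  proof (rule lp_fin_infinity_le)
    show "0 \<le> c * weak_lp_bloch \<infinity> n lam z"
      using \<open>0 \<le> c\<close> weak_lp_bloch_nonneg[OF _ z] by simp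
    fix i assume "i < n"
    with z have zi: "z i \<in> unit_disc" by simp
    have "norm (cder f (z i)) \<le> c / (1 - (cmod (z i))\<^sup>2)"
      using bound zi unit_disc_weight_pos[OF zi] by (simp add: pos_le_divide_eq mult.commute)
    then have "cmod (lam i) * norm (cder f (z i)) \<le> cmod (lam i) * (c / (1 - (cmod (z i))\<^sup>2))"
      by (rule mult_left_mono) simp
    also have "\<dots> = c * (cmod (lam i) / (1 - (cmod (z i))\<^sup>2))"
      by simp
    also have "\<dots> \<le> c * weak_lp_bloch \<infinity> n lam z"
      using \<open>0 \<le> c\<close> weak_lp_bloch_infinity_ge[OF z \<open>i < n\<close>] by (rule mult_left_mono[rotated])
    finally show "cmod (lam i) * norm (cder f (z i)) \<le> c * weak_lp_bloch \<infinity> n lam z" .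
  qed
  ultimately show "psum_const \<infinity> f c"
    unfolding psum_const_iff by blast
qed

lemma weak_lp_bloch_powr_weighted_le:
  fixes p q :: real
  assumes "1 \<le> p" "p < q" and z: "\<forall>i<n. z i \<in> unit_disc" and a: "\<And>i. 0 \<le> a i"
  shows "weak_lp_bloch p n (\<lambda>i. of_real (a i powr ((q - p) / p)) * lam i) z
           \<le> lp_fin q n a powr ((q - p) / p) * weak_lp_bloch q n lam z"
  unfolding weak_lp_bloch_def[of p]
proof (rule cSUP_least[OF bloch_hat_ball_nonempty])
  fix g assume g: "g \<in> bloch_hat_ball"
  have "lp_fin p n (\<lambda>i. cmod (of_real (a i powr ((q - p) / p)) * lam i) * cmod (cder g (z i)))
      = lp_fin p n (\<lambda>i. a i powr ((q - p) / p) * (cmod (lam i) * cmod (cder g (z i))))"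
    by (simp add: norm_mult mult.assoc)
  also have "\<dots> \<le> lp_fin q n a powr ((q - p) / p) * lp_fin q n (\<lambda>i. cmod (lam i) * cmod (cder g (z i)))"
    using assms by (intro lp_fin_powr_weighted_le) auto
  also have "\<dots> \<le> lp_fin q n a powr ((q - p) / p) * weak_lp_bloch q n lam z"
    using assms g by (intro mult_left_mono lp_fin_le_weak_lp_bloch) auto
  finally show "lp_fin p n (\<lambda>i. cmod (of_real (a i powr ((q - p) / p)) * lam i) * cmod (cder g (z i)))
      \<le> lp_fin q n a powr ((q - p) / p) * weak_lp_bloch q n lam z" .
qed

lemma psum_const_mono_real:
  fixes p q :: real
  assumes "1 \<le> p" "p < q" and P: "psum_const p f c"
  shows "psum_const q f c"
  unfolding psum_const_iff
proof (intro conjI allI impI)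
  show "0 \<le> c"
    using P by (simp add: psum_const_def)
  fix n :: nat and lam z :: "nat \<Rightarrow> complex"
  assume z: "\<forall>i<n. z i \<in> unit_disc"
  define a where "a i = cmod (lam i) * norm (cder f (z i))" for i
  define L where "L = lp_fin q n a"
  define W where "W = weak_lp_bloch q n lam z"
  have a: "0 \<le> a i" for i
    by (simp add: a_def)
  have "L powr (q / p)
      = lp_fin p n (\<lambda>i. cmod (of_real (a i powr ((q - p) / p)) * lam i) * norm (cder f (z i)))"
    using assms a by (simp add: L_def lp_fin_powr_self_weighted[symmetric] norm_mult a_def mult.assoc)
  also have "\<dots> \<le> c * weak_lp_bloch p n (\<lambda>i. of_real (a i powr ((q - p) / p)) * lam i) z"
    using P z by (rule psum_constD)
  also have "\<dots> \<le> c * (L powr ((q - p) / p) * W)"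
    using assms z a \<open>0 \<le> c\<close> unfolding L_def W_def
    by (intro mult_left_mono weak_lp_bloch_powr_weighted_le) auto
  finally have main: "L powr (q / p) \<le> c * (L powr ((q - p) / p) * W)" .
  have "L \<le> c * W"
  proof (cases "L = 0")
    case True
    then show ?thesis
      using \<open>0 \<le> c\<close> weak_lp_bloch_nonneg[OF _ z] assms by (simp add: W_def)
  next
    case False
    then have L: "0 < L"
      using lp_fin_nonneg[of q n a] by (simp add: L_def)
    have "(q - p) / p + 1 = q / p"
      using assms by (simp add: field_simps)
    then have "L powr (q / p) = L powr ((q - p) / p) * L"
      using L by (metis powr_add powr_one less_imp_le)
    with main L show ?thesis
      by (simp add: mult.left_commute)
  qed
  then show "lp_fin q n (\<lambda>i. cmod (lam i) * norm (cder f (z i))) \<le> c * weak_lp_bloch q n lam z"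
    unfolding L_def W_def a_def[abs_def] .
qed

lemma psum_const_mono:
  assumes "1 \<le> p" and "p < q" and "psum_const p f c"
  shows "psum_const q f c"
proof -
  obtain r where r: "p = ereal r"
    using assms(1,2) by (cases p) auto
  show ?thesis
  proof (cases q)
    case (real s)
    then show ?thesis
      using assms r psum_const_mono_real[of r s f c] by simp
  next
    case PInf
    then show ?thesis
      using psum_const_imp_weighted_cder_le[OF assms(1,3)] by (simp add: psum_const_infinity_iff)
  qed (use assms in simp)
qed

lemma Inf_upper_bounds_eq_SUP:
  fixes f :: "'a \<Rightarrow> 'b::conditionally_complete_lattice"
  assumes "A \<noteq> {}" and "bdd_above (f ` A)"
  shows "Inf {c. \<forall>x\<in>A. f x \<le> c} = (SUP x\<in>A. f x)"
  using assms by (intro cInf_eq_minimum) (auto intro: cSUP_upper cSUP_least)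

lemma pi_bloch_mono:
  assumes "1 \<le> p" and "p < q" and "f \<in> Pi_bloch p"
  shows "pi_bloch q f \<le> pi_bloch p f"
  unfolding pi_bloch_def
proof (rule cInf_superset_mono)
  show "{c. psum_const p f c} \<noteq> {}"
    using assms(3) by (auto simp: Pi_bloch_def)
  show "bdd_below {c. psum_const q f c}"
    by (rule bdd_belowI[of _ 0]) (simp add: psum_const_def)
  show "{c. psum_const p f c} \<subseteq> {c. psum_const q f c}"
    using psum_const_mono[OF assms(1,2)] by blast
qed

lemma Pi_bloch_infinity: "Pi_bloch \<infinity> = bloch_space"
  by (auto simp: Pi_bloch_def bloch_space_def psum_const_infinity_iff bdd_above_def)

lemma pi_bloch_infinity: "pi_bloch \<infinity> f = bloch_norm f" if "f \<in> bloch_space"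
  using that unfolding pi_bloch_def bloch_norm_def psum_const_infinity_iff
  by (intro Inf_upper_bounds_eq_SUP) (auto simp: bloch_space_def unit_disc_def)

theorem proposition1p1:
  fixes p q :: ereal
  assumes "1 \<le> p" and "p < q"
  shows "(Pi_bloch p :: (complex \<Rightarrow> 'a::complex_banach) set) \<subseteq> Pi_bloch q
    \<and> (\<forall>f \<in> (Pi_bloch p :: (complex \<Rightarrow> 'a) set). pi_bloch q f \<le> pi_bloch p f)
    \<and> (Pi_bloch \<infinity> :: (complex \<Rightarrow> 'a) set) = bloch_space
    \<and> (\<forall>f \<in> (Pi_bloch \<infinity> :: (complex \<Rightarrow> 'a) set). pi_bloch \<infinity> f = bloch_norm f)"
proof (intro conjI ballI)
  show "(Pi_bloch p :: (complex \<Rightarrow> 'a) set) \<subseteq> Pi_bloch q"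
    using psum_const_mono[OF assms] by (auto simp: Pi_bloch_def)
  show "pi_bloch q f \<le> pi_bloch p f" if "f \<in> Pi_bloch p" for f :: "complex \<Rightarrow> 'a"
    using assms that by (rule pi_bloch_mono)
  show "(Pi_bloch \<infinity> :: (complex \<Rightarrow> 'a) set) = bloch_space"
    by (rule Pi_bloch_infinity)
  show "pi_bloch \<infinity> f = bloch_norm f" if "f \<in> Pi_bloch \<infinity>" for f :: "complex \<Rightarrow> 'a"
    using that by (simp add: Pi_bloch_infinity pi_bloch_infinity)
qed

end
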